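(* Let $n\ge 2$, $0\le d\le n-1$, and let $\mathbf{P}=(P_1,\dots,P_{n+1})$ be a Roy-system of dimension $n+1$ on $[Q_0,\infty)$. Then \[\underline{\delta}(\mathbf{P})\le d+(n+1)\liminf_{q\to\infty}\frac{P_1(q)+\cdots+P_{n-d}(q)}{q}.\]
   Context: A Roy-system of dimension $n+1$ on an interval $I\subset[0,\infty)$ with nonempty interior is a continuous piecewise linear map $\mathbf{P}=(P_1,\dots,P_{n+1}):I\to\mathbb{R}^{n+1}$ such that: (S1) for each $q\in I$, $0\le P_1(q)\le\cdots\le P_{n+1}(q)$ and $P_1(q)+\cdots+P_{n+1}(q)=q$; (S2) on every nonempty open subinterval $H$ of $I$ where $\mathbf{P}$ is differentiable, there are integers $1\le\underline r\le\bar r\le n+1$ such that $P_{\underline r},\dots,P_{\bar r}$ coincide on $H$ and have slope $1/(\bar r-\underline r+1)$, while every other component is constant on $H$; (S3) if $q$ is an interior point of $I$ where $\mathbf{P}$ is not differentiable, and $\underline r,\bar r,\underline s,\bar s$ are the integers with $P_j'(q^-)=1/(\bar r-\underline r+1)$ for $\underline r\le j\le\bar r$ and $P_j'(q^+)=1/(\bar s-\underline s+1)$ for $\underline s\le j\le\bar s$, and if $\underline r<\bar s$, then $P_{\underline r}(q)=P_{\underline r+1}(q)=\cdots=P_{\bar s}(q)$. The local contraction rate at a point $q$ where $\mathbf{P}$ is differentiable is $\delta(\mathbf{P},q)=n+1-\kappa$, where $\kappa=\min\{k:P_k'(q)>0\}$. The average contraction rate is $\Delta(\mathbf{P},Q)=\frac{1}{Q-Q_0}\int_{Q_0}^{Q}\delta(\mathbf{P},q)\,dq$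 for $Q>Q_0$, and the lower average contraction rate is $\underline{\delta}(\mathbf{P})=\liminf_{Q\to\infty}\Delta(\mathbf{P},Q)$. *)

theory Defs
  imports "HOL-Analysis.Analysis"
begin

text \<open>A map P : [Q0,oo) -> R^(n+1) is represented as P :: real => nat => real,
  the components being P q 1, ..., P q (n+1).\<close>

definition piecewise_linear_on :: "real \<Rightarrow> nat \<Rightarrow> (real \<Rightarrow> nat \<Rightarrow> real) \<Rightarrow> bool" where
  "piecewise_linear_on Q0 n P \<longleftrightarrow>
     (\<forall>a b. Q0 \<le> a \<and> a < b \<longrightarrow>
        (\<exists>(t::nat \<Rightarrow> real) k. t 0 = a \<and> t k = b \<and> (\<forall>i<k. t i < t (Suc i)) \<and>
           (\<forall>i<k. \<forall>j\<in>{1..n+1}. \<exists>\<alpha> \<beta>. \<forall>x\<in>{t i..t (Suc i)}. P x j = \<alpha> * x + \<beta>)))"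

definition diff_at :: "nat \<Rightarrow> (real \<Rightarrow> nat \<Rightarrow> real) \<Rightarrow> real \<Rightarrow> bool" where
  "diff_at n P q \<longleftrightarrow> (\<forall>j\<in>{1..n+1}. (\<lambda>t. P t j) differentiable (at q))"

definition roy_system :: "nat \<Rightarrow> real \<Rightarrow> (real \<Rightarrow> nat \<Rightarrow> real) \<Rightarrow> bool" where
  "roy_system n Q0 P \<longleftrightarrow>
     Q0 \<ge> 0 \<and>
     (\<forall>j\<in>{1..n+1}. continuous_on {Q0..} (\<lambda>q. P q j)) \<and>
     piecewise_linear_on Q0 n P \<and>
     \<comment> \<open>(S1)\<close>
     (\<forall>q\<ge>Q0. 0 \<le> P q 1 \<and> (\<forall>j\<in>{1..n}. P q j \<le> P q (Suc j)) \<and> (\<Sum>j=1..n+1. P q j) = q) \<and>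
     \<comment> \<open>(S2)\<close>
     (\<forall>H. is_interval H \<and> open H \<and> H \<noteq> {} \<and> H \<subseteq> {Q0..} \<and> (\<forall>q\<in>H. diff_at n P q) \<longrightarrow>
        (\<exists>rl rh. 1 \<le> rl \<and> rl \<le> rh \<and> rh \<le> n+1 \<and>
           (\<forall>q\<in>H. \<forall>j\<in>{rl..rh}. P q j = P q rl \<and>
               ((\<lambda>t. P t j) has_real_derivative (1 / real (rh - rl + 1))) (at q)) \<and>
           (\<forall>j\<in>{1..n+1} - {rl..rh}. \<exists>c. \<forall>q\<in>H. P q j = c))) \<and>
     \<comment> \<open>(S3)\<close>
     (\<forall>q>Q0. \<not> diff_at n P q \<longrightarrow>
        (\<forall>rl rh sl sh. 1 \<le> rl \<and> rl \<le> rh \<and> rh \<le> n+1 \<and> 1 \<le> sl \<and> sl \<le> sh \<and> sh \<le> n+1 \<and>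
           (\<forall>j\<in>{1..n+1}. ((\<lambda>t. P t j) has_real_derivative
               (if rl \<le> j \<and> j \<le> rh then 1 / real (rh - rl + 1) else 0)) (at_left q)) \<and>
           (\<forall>j\<in>{1..n+1}. ((\<lambda>t. P t j) has_real_derivative
               (if sl \<le> j \<and> j \<le> sh then 1 / real (sh - sl + 1) else 0)) (at_right q)) \<and>
           rl < sh \<longrightarrow> (\<forall>j\<in>{rl..sh}. P q j = P q rl)))"

text \<open>Local contraction rate; only meaningful where P is differentiable
  (a null set of exceptions, irrelevant for the integral), set to 0 elsewhere.\<close>
definition local_contraction :: "nat \<Rightarrow> (real \<Rightarrow> nat \<Rightarrow> real) \<Rightarrow> real \<Rightarrow> real" where
  "local_contraction n P q =
     (if diff_at n P q
      then real (n + 1) - real (LEAST k. 1 \<le> k \<and> k \<le> n+1 \<and> deriv (\<lambda>t. P t k) q > 0)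
      else 0)"

definition avg_contraction :: "nat \<Rightarrow> real \<Rightarrow> (real \<Rightarrow> nat \<Rightarrow> real) \<Rightarrow> real \<Rightarrow> real" where
  "avg_contraction n Q0 P Q = integral {Q0..Q} (local_contraction n P) / (Q - Q0)"

definition lower_avg_contraction :: "nat \<Rightarrow> real \<Rightarrow> (real \<Rightarrow> nat \<Rightarrow> real) \<Rightarrow> ereal" where
  "lower_avg_contraction n Q0 P = Liminf at_top (\<lambda>Q. ereal (avg_contraction n Q0 P Q))"

end

theory Submission
  imports Defs "HOL-Real_Asymp.Real_Asymp"
begin

text \<open>On every linear piece of a Roy-system some block P_rl, ..., P_rh rises with common slope
  1/(rh - rl + 1) while the other components are constant, and the local contraction rate there
  is n + 1 - rl. Of the first m components, at least m + 1 - rl rise, so their sum rises at rate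
  at least (m + 1 - rl)/(n + 1); hence the rate is bounded by n - m plus n + 1 times the growth
  rate of P_1 + ... + P_m. Integrating over the pieces and dividing by Q - Q0 gives the average
  rate up to an error O(Q0/Q), because the partial sum is nonnegative and at most Q.
  Taking m = n - d yields the theorem.\<close>

definition block_slope :: "nat \<Rightarrow> nat \<Rightarrow> nat \<Rightarrow> real" where
  "block_slope rl rh j = (if rl \<le> j \<and> j \<le> rh then 1 / real (rh - rl + 1) else 0)"

lemma roy_system_component_mono:
  assumes R: "roy_system n Q0 P" and q: "Q0 \<le> q" and "1 \<le> i" "i \<le> j" "j \<le> n + 1"
  shows "P q i \<le> P q j"
  using \<open>i \<le> j\<close> \<open>j \<le> n + 1\<close>
proof (induction j rule: dec_induct)
  case (step k)
  then have "P q k \<le> P q (Suc k)"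
    using R q \<open>1 \<le> i\<close> unfolding roy_system_def by auto
  with step show ?case by simp
qed simp

lemma roy_system_component_nonneg:
  assumes R: "roy_system n Q0 P" and q: "Q0 \<le> q" and j: "j \<in> {1..n+1}"
  shows "0 \<le> P q j"
proof -
  have "0 \<le> P q 1" using R q unfolding roy_system_def by auto
  also have "\<dots> \<le> P q j" using roy_system_component_mono[OF R q] j by auto
  finally show ?thesis .
qed

lemma roy_system_partial_sum_bounds:
  assumes R: "roy_system n Q0 P" and q: "Q0 \<le> q" and m: "m \<le> n + 1"
  shows "0 \<le> (\<Sum>j=1..m. P q j)" and "(\<Sum>j=1..m. P q j) \<le> q"
proof -
  show "0 \<le> (\<Sum>j=1..m. P q j)"
    using roy_system_component_nonneg[OF R q] m by (intro sum_nonneg) auto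
  have "(\<Sum>j=1..m. P q j) \<le> (\<Sum>j=1..n+1. P q j)"
    using roy_system_component_nonneg[OF R q] m by (intro sum_mono2) auto
  also have "\<dots> = q" using R q unfolding roy_system_def by auto
  finally show "(\<Sum>j=1..m. P q j) \<le> q" .
qed

lemma sum_block_slope_lower_bound:
  assumes "1 \<le> rl" "rl \<le> rh" "rh \<le> n + 1" "m \<le> n + 1"
  shows "real (m + 1) - real rl \<le> real (n + 1) * (\<Sum>j=1..m. block_slope rl rh j)"
proof -
  have sum_eq: "(\<Sum>j=1..m. block_slope rl rh j)
      = (\<Sum>j\<in>{1..m} \<inter> {rl..rh}. 1 / real (rh - rl + 1))"
    unfolding sum.inter_restrict[OF finite_atLeastAtMost] by (simp add: block_slope_def)
  show ?thesis
  proof (cases "rh \<le> m")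
    case True
    then have block: "{1..m} \<inter> {rl..rh} = {rl..rh}" using assms by auto
    have "(\<Sum>j=1..m. block_slope rl rh j) = 1"
      unfolding sum_eq block using assms by simp
    then show ?thesis using assms by simp
  next
    case False
    then have block: "{1..m} \<inter> {rl..rh} = {rl..m}" using assms by auto
    have sum_val: "(\<Sum>j=1..m. block_slope rl rh j) = real (m + 1 - rl) / real (rh - rl + 1)"
      unfolding sum_eq block using assms by simp
    have "real (m + 1 - rl) * real (rh - rl + 1) \<le> real (m + 1 - rl) * real (n + 1)"
      using assms by (intro mult_left_mono) auto
    then have "real (m + 1 - rl) \<le> real (n + 1) * (real (m + 1 - rl) / real (rh - rl + 1))"
      by (simp add: field_simps)
    moreover have "real (m + 1) - real rl \<le> real (m + 1 - rl)" by arith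
    ultimately show ?thesis unfolding sum_val by linarith
  qed
qed

lemma roy_system_linear_piece:
  assumes R: "roy_system n Q0 P" and ab: "Q0 \<le> a" "a < b"
    and lin: "\<forall>j\<in>{1..n+1}. \<exists>\<alpha> \<beta>. \<forall>x\<in>{a..b}. P x j = \<alpha> * x + \<beta>"
  obtains rl rh where "1 \<le> rl" "rl \<le> rh" "rh \<le> n + 1"
    and "\<And>j. j \<in> {1..n+1} \<Longrightarrow> P b j - P a j = block_slope rl rh j * (b - a)"
    and "\<And>x. x \<in> {a<..<b} \<Longrightarrow> local_contraction n P x = real (n + 1) - real rl"
proof -
  obtain \<alpha> \<beta> where L: "\<And>j x. j \<in> {1..n+1} \<Longrightarrow> x \<in> {a..b} \<Longrightarrow> P x j = \<alpha> j * x + \<beta> j"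
    using lin by metis
  define H where "H = {a<..<b}"
  have der: "((\<lambda>t. P t j) has_real_derivative \<alpha> j) (at x)" if "j \<in> {1..n+1}" "x \<in> H" for j x
  proof -
    have "((\<lambda>t. \<alpha> j * t + \<beta> j) has_real_derivative \<alpha> j) (at x)"
      by (auto intro!: derivative_eq_intros)
    then show ?thesis
      by (rule has_field_derivative_transform_within_open[where S=H])
        (use that L in \<open>auto simp: H_def\<close>)
  qed
  have diff: "diff_at n P x" if "x \<in> H" for x
    unfolding diff_at_def using der that real_differentiable_def by blast
  have S2: "\<forall>H. is_interval H \<and> open H \<and> H \<noteq> {} \<and> H \<subseteq> {Q0..} \<and> (\<forall>q\<in>H. diff_at n P q) \<longrightarrow>
      (\<exists>rl rh. 1 \<le> rl \<and> rl \<le> rh \<and> rh \<le> n + 1 \<and>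
         (\<forall>q\<in>H. \<forall>j\<in>{rl..rh}. P q j = P q rl \<and>
             ((\<lambda>t. P t j) has_real_derivative (1 / real (rh - rl + 1))) (at q)) \<and>
         (\<forall>j\<in>{1..n+1} - {rl..rh}. \<exists>c. \<forall>q\<in>H. P q j = c))"
    using R unfolding roy_system_def by blast
  have "is_interval H" "open H" "H \<noteq> {}" "H \<subseteq> {Q0..}"
    using ab by (auto simp: H_def is_interval_1)
  then obtain rl rh where rr: "1 \<le> rl" "rl \<le> rh" "rh \<le> n + 1"
    and moving: "\<forall>q\<in>H. \<forall>j\<in>{rl..rh}.
        ((\<lambda>t. P t j) has_real_derivative (1 / real (rh - rl + 1))) (at q)"
    and stationary: "\<forall>j\<in>{1..n+1} - {rl..rh}. \<exists>c. \<forall>q\<in>H. P q j = c"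
    using S2[rule_format, of H] diff by blast
  define mid where "mid = (a + b) / 2"
  have mid: "mid \<in> H" using ab by (simp add: mid_def H_def)
  have slope: "\<alpha> j = block_slope rl rh j" if j: "j \<in> {1..n+1}" for j
  proof (cases "rl \<le> j \<and> j \<le> rh")
    case True
    then show ?thesis
      using DERIV_unique[OF der[OF j mid]] moving mid by (auto simp: block_slope_def)
  next
    case False
    then have "j \<in> {1..n+1} - {rl..rh}" using j by auto
    then obtain c where c: "\<forall>q\<in>H. P q j = c" using stationary by blast
    have "((\<lambda>t. P t j) has_real_derivative 0) (at mid)"
      by (rule has_field_derivative_transform_within_open[where S=H and f="\<lambda>_. c"])
        (use mid c in \<open>auto simp: H_def\<close>)
    then show ?thesis
      using DERIV_unique[OF der[OF j mid]] False by (simp add: block_slope_def)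
  qed
  show ?thesis
  proof
    show "P b j - P a j = block_slope rl rh j * (b - a)" if "j \<in> {1..n+1}" for j
      using L[OF that, of a] L[OF that, of b] slope[OF that] ab by (simp add: algebra_simps)
  next
    fix x assume x: "x \<in> {a<..<b}"
    have "(LEAST k. 1 \<le> k \<and> k \<le> n + 1 \<and> deriv (\<lambda>t. P t k) x > 0) = rl"
    proof (rule Least_equality)
      have "deriv (\<lambda>t. P t k) x = block_slope rl rh k" if "k \<in> {1..n+1}" for k
        using DERIV_imp_deriv[OF der[OF that]] x slope[OF that] by (simp add: H_def)
      then show "1 \<le> rl \<and> rl \<le> n + 1 \<and> deriv (\<lambda>t. P t rl) x > 0"
        and "\<And>k. 1 \<le> k \<and> k \<le> n + 1 \<and> deriv (\<lambda>t. P t k) x > 0 \<Longrightarrow> rl \<le> k"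
        using rr by (auto simp: block_slope_def split: if_splits)
    qed
    then show "local_contraction n P x = real (n + 1) - real rl"
      using diff x by (simp add: local_contraction_def H_def)
  qed (use rr in auto)
qed

lemma local_contraction_has_integral_piece:
  assumes R: "roy_system n Q0 P" and ab: "Q0 \<le> a" "a < b" and m: "m \<le> n"
    and lin: "\<forall>j\<in>{1..n+1}. \<exists>\<alpha> \<beta>. \<forall>x\<in>{a..b}. P x j = \<alpha> * x + \<beta>"
  shows "\<exists>I. (local_contraction n P has_integral I) {a..b} \<and>
    I \<le> real (n - m) * (b - a) + real (n + 1) * ((\<Sum>j=1..m. P b j) - (\<Sum>j=1..m. P a j))"
proof -
  obtain rl rh where rr: "1 \<le> rl" "rl \<le> rh" "rh \<le> n + 1"
    and growth: "\<And>j. j \<in> {1..n+1} \<Longrightarrow> P b j - P a j = block_slope rl rh j * (b - a)"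
    and rate: "\<And>x. x \<in> {a<..<b} \<Longrightarrow> local_contraction n P x = real (n + 1) - real rl"
    using roy_system_linear_piece[OF R ab lin] by blast
  define c where "c = real (n + 1) - real rl"
  define \<sigma> where "\<sigma> = (\<Sum>j=1..m. block_slope rl rh j)"
  have "(local_contraction n P has_integral c * (b - a)) {a..b}"
  proof (rule has_integral_spike_finite[where S="{a, b}" and f="\<lambda>_. c"])
    show "((\<lambda>_. c) has_integral c * (b - a)) {a..b}"
      using has_integral_const_real[of c a b] ab by (simp add: mult.commute)
  qed (use rate in \<open>auto simp: c_def\<close>)
  moreover have "c * (b - a)
      \<le> real (n - m) * (b - a) + real (n + 1) * ((\<Sum>j=1..m. P b j) - (\<Sum>j=1..m. P a j))"
  proof -
    have "c \<le> real (n - m) + real (n + 1) * \<sigma>"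
      using sum_block_slope_lower_bound[OF rr, of m] m by (simp add: c_def \<sigma>_def of_nat_diff)
    then have "c * (b - a) \<le> (real (n - m) + real (n + 1) * \<sigma>) * (b - a)"
      using ab by (intro mult_right_mono) auto
    also have "\<dots> = real (n - m) * (b - a) + real (n + 1) * (\<sigma> * (b - a))"
      by (simp add: algebra_simps)
    also have "\<sigma> * (b - a) = (\<Sum>j=1..m. P b j) - (\<Sum>j=1..m. P a j)"
      using m by (simp add: \<sigma>_def sum_subtractf[symmetric] sum_distrib_right growth)
    finally show ?thesis .
  qed
  ultimately show ?thesis by blast
qed

lemma integral_local_contraction_le:
  assumes R: "roy_system n Q0 P" and ab: "Q0 \<le> a" "a < b" and m: "m \<le> n"
  shows "integral {a..b} (local_contraction n P)
    \<le> real (n - m) * (b - a) + real (n + 1) * ((\<Sum>j=1..m. P b j) - (\<Sum>j=1..m. P a j))"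
proof -
  define B where
    "B x y = real (n - m) * (y - x) + real (n + 1) * ((\<Sum>j=1..m. P y j) - (\<Sum>j=1..m. P x j))"
    for x y
  obtain t :: "nat \<Rightarrow> real" and k where t0: "t 0 = a" and tk: "t k = b"
    and inc: "\<forall>i<k. t i < t (Suc i)"
    and lin: "\<forall>i<k. \<forall>j\<in>{1..n+1}. \<exists>\<alpha> \<beta>. \<forall>x\<in>{t i..t (Suc i)}. P x j = \<alpha> * x + \<beta>"
    using R ab unfolding roy_system_def piecewise_linear_on_def by (meson order_refl)
  have partial: "t 0 \<le> t i \<and>
      (\<exists>I. (local_contraction n P has_integral I) {t 0..t i} \<and> I \<le> B (t 0) (t i))"
    if "i \<le> k" for i
    using that
  proof (induction i)
    case 0
    then show ?case by (auto simp: B_def)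
  next
    case (Suc i)
    then obtain I where le: "t 0 \<le> t i" and I: "(local_contraction n P has_integral I) {t 0..t i}"
      and I_le: "I \<le> B (t 0) (t i)"
      by auto
    have lt: "t i < t (Suc i)" using inc Suc.prems by auto
    obtain J where J: "(local_contraction n P has_integral J) {t i..t (Suc i)}"
      and J_le: "J \<le> B (t i) (t (Suc i))"
      using local_contraction_has_integral_piece[OF R _ lt m] le t0 ab lin Suc.prems
      unfolding B_def by auto
    have "(local_contraction n P has_integral I + J) {t 0..t (Suc i)}"
      using has_integral_combine[OF le _ I J] lt by simp
    moreover have "I + J \<le> B (t 0) (t (Suc i))"
      using I_le J_le by (simp add: B_def algebra_simps)
    ultimately show ?case using le lt by auto
  qed
  from partial[OF order_refl] obtain I where "(local_contraction n P has_integral I) {a..b}"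
    and "I \<le> B a b"
    using t0 tk by auto
  then show ?thesis using integral_unique unfolding B_def by blast
qed

lemma avg_contraction_le:
  assumes R: "roy_system n Q0 P" and Q: "Q0 < Q" and m: "m \<le> n"
  shows "avg_contraction n Q0 P Q
    \<le> real (n - m) + real (n + 1) * ((\<Sum>j=1..m. P Q j) / Q) + real (n + 1) * (Q0 / (Q - Q0))"
proof -
  define S where "S q = (\<Sum>j=1..m. P q j)" for q
  have Q0: "0 \<le> Q0" using R unfolding roy_system_def by blast
  have S: "0 \<le> S Q0" "0 \<le> S Q" "S Q \<le> Q"
    using roy_system_partial_sum_bounds[OF R] Q m unfolding S_def by auto
  have "(S Q - S Q0) / (Q - Q0) \<le> S Q / (Q - Q0)"
    using S Q by (intro divide_right_mono) auto
  also have "\<dots> = S Q / Q + S Q / Q * (Q0 / (Q - Q0))"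
    using Q Q0 by (simp add: field_simps)
  also have "\<dots> \<le> S Q / Q + Q0 / (Q - Q0)"
    using S Q Q0 by (intro add_left_mono mult_left_le_one_le) auto
  finally have rate: "(S Q - S Q0) / (Q - Q0) \<le> S Q / Q + Q0 / (Q - Q0)" .
  have "avg_contraction n Q0 P Q
      \<le> (real (n - m) * (Q - Q0) + real (n + 1) * (S Q - S Q0)) / (Q - Q0)"
    unfolding avg_contraction_def S_def
    using integral_local_contraction_le[OF R order_refl Q m] Q by (simp add: divide_right_mono)
  also have "\<dots> = real (n - m) + real (n + 1) * ((S Q - S Q0) / (Q - Q0))"
    using Q by (simp add: field_simps)
  also have "\<dots> \<le> real (n - m) + real (n + 1) * (S Q / Q + Q0 / (Q - Q0))"
    using rate by (intro add_left_mono mult_left_mono) auto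
  finally show ?thesis by (simp add: S_def distrib_left add.assoc)
qed

lemma Liminf_le_add_mult_Liminf:
  fixes f g h :: "'a \<Rightarrow> real"
  assumes F: "F \<noteq> bot" and k: "0 \<le> k"
    and le: "\<forall>\<^sub>F x in F. f x \<le> c + k * g x + h x" and h: "(h \<longlongrightarrow> 0) F"
  shows "Liminf F (\<lambda>x. ereal (f x)) \<le> ereal c + ereal k * Liminf F (\<lambda>x. ereal (g x))"
proof (rule ereal_le_epsilon2)
  fix e :: real assume e: "0 < e"
  have "\<forall>\<^sub>F x in F. h x < e" using order_tendstoD(2)[OF h e] .
  with le have "\<forall>\<^sub>F x in F. ereal (f x) \<le> ereal c + ereal k * ereal (g x) + ereal e"
    by eventually_elim simp
  then have "Liminf F (\<lambda>x. ereal (f x))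
      \<le> Liminf F (\<lambda>x. ereal c + ereal k * ereal (g x) + ereal e)"
    by (rule Liminf_mono)
  also have "\<dots> = Liminf F (\<lambda>x. ereal c + ereal k * ereal (g x)) + ereal e"
    by (rule Liminf_add_ereal_right[OF F]) simp
  also have "\<dots> = ereal c + Liminf F (\<lambda>x. ereal k * ereal (g x)) + ereal e"
    by (subst Liminf_add_ereal_left[OF F]) simp_all
  also have "\<dots> = ereal c + ereal k * Liminf F (\<lambda>x. ereal (g x)) + ereal e"
    by (subst Liminf_ereal_mult_left[OF F]) (use k in simp_all)
  finally show "Liminf F (\<lambda>x. ereal (f x))
      \<le> ereal c + ereal k * Liminf F (\<lambda>x. ereal (g x)) + ereal e" .
qed

theorem mainTheorem7:
  fixes n d :: nat and Q0 :: real and P :: "real \<Rightarrow> nat \<Rightarrow> real"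
  assumes "n \<ge> 2" and "d \<le> n - 1" and "roy_system n Q0 P"
  shows "lower_avg_contraction n Q0 P
           \<le> ereal (real d) + ereal (real (n + 1)) *
              Liminf at_top (\<lambda>q. ereal ((\<Sum>j=1..n-d. P q j) / q))"
proof -
  have d: "n - (n - d) = d" using assms(2) by simp
  have "\<forall>\<^sub>F Q in at_top. avg_contraction n Q0 P Q
      \<le> real d + real (n + 1) * ((\<Sum>j=1..n-d. P Q j) / Q) + real (n + 1) * (Q0 / (Q - Q0))"
    using eventually_gt_at_top[of Q0]
    by eventually_elim (use avg_contraction_le[OF assms(3), of _ "n - d"] d in auto)
  moreover have "((\<lambda>Q. real (n + 1) * (Q0 / (Q - Q0))) \<longlongrightarrow> 0) at_top"
    by real_asymp
  ultimately show ?thesis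
    unfolding lower_avg_contraction_def by (intro Liminf_le_add_mult_Liminf) auto
qed

end
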